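(* Let $(M,a)$ be Kerr–AdS parameters with $(\mathfrak m,\mathfrak a)\in\mathscr P$, and for $\tilde\lambda\in\mathbb R$ define on $x\in[0,1]$ $$W_1(x)=\Xi^2-\Big[\Xi a^2\omega_-^2+2a\omega_-\Xi\frac{a^2}{l^2}\Big]x^2(1-x^2)-\tilde\lambda\,\Delta_x(1-x^2).$$ Then: (1) if $\tilde\lambda<\Xi^2$, then $W_1>0$ on $[0,1]$; (2) if $\tilde\lambda=\Xi^2$, then $W_1>0$ on $(0,1]$ and $W_1(0)=0$; (3) if $\tilde\lambda>\Xi^2$, then $W_1$ has exactly one root $x_0$ in $[0,1]$, this root satisfies $x_0\in(0,1)$, and $\frac{dW_1}{dx}(x)\ge c\,\tilde\lambda x$ for all $x\in[0,1]$, for a constant $c>0$ depending only on the black hole parameters.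
   Context: $l=\sqrt{-3/\Lambda}$ with $\Lambda<0$; $\Delta(r)=(r^2+a^2)(1+r^2/l^2)-2Mr$ with roots $0<r_-<r_+$, $0<a<l$, $r_+^2>al$ (i.e. $(\mathfrak m,\mathfrak a)=(M\sqrt3/l,a\sqrt3/l)$ lies in the subextremal, Hawking–Reall-bound parameter set $\mathscr P$). $\Xi=1-a^2/l^2$, $\Delta_x=1-\frac{a^2}{l^2}x^2$, $\omega_-=\frac{a\Xi}{r_-^2+a^2}$. *)

theory Defs
  imports "HOL-Analysis.Analysis"
begin

text \<open>Kerr--AdS quantities; l = sqrt(-3/Lambda) > 0.\<close>

definition KDelta :: "real \<Rightarrow> real \<Rightarrow> real \<Rightarrow> real \<Rightarrow> real" where
  "KDelta M a l r = (r^2 + a^2) * (1 + r^2 / l^2) - 2 * M * r"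

definition Xi :: "real \<Rightarrow> real \<Rightarrow> real" where
  "Xi a l = 1 - a^2 / l^2"

definition Delta_x :: "real \<Rightarrow> real \<Rightarrow> real \<Rightarrow> real" where
  "Delta_x a l x = 1 - (a^2 / l^2) * x^2"

definition omega_minus :: "real \<Rightarrow> real \<Rightarrow> real \<Rightarrow> real" where
  "omega_minus a l rm = a * Xi a l / (rm^2 + a^2)"

text \<open>Kerr--AdS parameters in the subextremal, Hawking--Reall-bound set P,
  with r_- and r_+ the roots of Delta.\<close>
definition KAdS_params :: "real \<Rightarrow> real \<Rightarrow> real \<Rightarrow> real \<Rightarrow> real \<Rightarrow> bool" where
  "KAdS_params M a l rm rp \<longleftrightarrow>
     0 < l \<and> 0 < a \<and> a < l \<and> 0 < rm \<and> rm < rp \<and>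
     {r. 0 < r \<and> KDelta M a l r = 0} = {rm, rp} \<and>
     rp^2 > a * l"

definition W1 :: "real \<Rightarrow> real \<Rightarrow> real \<Rightarrow> real \<Rightarrow> real \<Rightarrow> real" where
  "W1 a l rm lam x =
     (Xi a l)^2
     - (Xi a l * a^2 * (omega_minus a l rm)^2
        + 2 * a * omega_minus a l rm * Xi a l * (a^2 / l^2)) * x^2 * (1 - x^2)
     - lam * Delta_x a l x * (1 - x^2)"

end

theory Submission
  imports Defs
begin

text \<open>Put \<open>y = x\<^sup>2\<close>, \<open>\<alpha> = a\<^sup>2/l\<^sup>2\<close> and \<open>s = a\<^sup>2/(r\<^sub>-\<^sup>2 + a\<^sup>2) \<in> (0,1)\<close>. Then
  \<open>\<Xi> = 1 - \<alpha>\<close> and \<open>a\<omega>\<^sub>- = \<Xi>s\<close>, so \<open>W\<^sub>1 = \<Xi>\<^sup>2 - \<Xi>\<^sup>2B y(1-y) - \<lambda>(1-\<alpha>y)(1-y)\<close> with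
  \<open>B = \<Xi>s\<^sup>2 + 2s\<alpha> \<in> [0, 1+\<alpha>)\<close>. At \<open>\<lambda> = \<Xi>\<^sup>2\<close> this equals \<open>\<Xi>\<^sup>2 y((1+\<alpha>-B)(1-y) + y) \<ge> 0\<close>,
  and lowering \<open>\<lambda>\<close> adds the nonnegative term \<open>(\<Xi>\<^sup>2-\<lambda>)(1-\<alpha>y)(1-y)\<close>.
  For \<open>\<lambda> > \<Xi>\<^sup>2\<close> the \<open>y\<close>-derivative is affine in \<open>y\<close>, with values at least \<open>\<lambda>(1+\<alpha>-B)\<close> at
  \<open>y = 0\<close> and \<open>\<lambda>(1-\<alpha>)\<close> at \<open>y = 1\<close>; hence \<open>dW\<^sub>1/dx \<ge> 2 min(1+\<alpha>-B, 1-\<alpha>) \<lambda>x\<close>, and \<open>W\<^sub>1\<close>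
  increases strictly from \<open>\<Xi>\<^sup>2-\<lambda> < 0\<close> to \<open>\<Xi>\<^sup>2 > 0\<close>, crossing zero exactly once.\<close>

lemma strict_mono_on_unique_root:
  fixes f :: "real \<Rightarrow> real"
  assumes "a \<le> b" "continuous_on {a..b} f" "strict_mono_on {a..b} f" "f a < 0" "0 < f b"
  shows "\<exists>!x. x \<in> {a..b} \<and> f x = 0"
    and "\<forall>x\<in>{a..b}. f x = 0 \<longrightarrow> x \<in> {a<..<b}"
proof -
  obtain x where "x \<in> {a..b}" "f x = 0"
    using IVT'[of f a 0 b] assms by auto
  moreover have "inj_on f {a..b}"
    using assms(3) by (rule strict_mono_on_imp_inj_on)
  ultimately show "\<exists>!x. x \<in> {a..b} \<and> f x = 0"
    by (metis inj_onD)
  show "\<forall>x\<in>{a..b}. f x = 0 \<longrightarrow> x \<in> {a<..<b}"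
    using assms(4,5) by (metis atLeastAtMost_iff greaterThanLessThan_iff less_irrefl order_le_less)
qed

definition W_quad :: "real \<Rightarrow> real \<Rightarrow> real \<Rightarrow> real \<Rightarrow> real \<Rightarrow> real" where
  "W_quad X al B lam y = X^2 - X^2 * B * y * (1 - y) - lam * (1 - al * y) * (1 - y)"

definition W_quad_dy :: "real \<Rightarrow> real \<Rightarrow> real \<Rightarrow> real \<Rightarrow> real \<Rightarrow> real" where
  "W_quad_dy X al B lam y = lam * (1 + al - 2 * al * y) - X^2 * B * (1 - 2 * y)"

definition rot_coeff :: "real \<Rightarrow> real \<Rightarrow> real \<Rightarrow> real" where
  "rot_coeff a l rm = Xi a l * (a^2 / (rm^2 + a^2))^2 + 2 * (a^2 / (rm^2 + a^2)) * (a^2 / l^2)"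

lemma W1_eq_W_quad:
  "W1 a l rm lam x = W_quad (Xi a l) (a^2 / l^2) (rot_coeff a l rm) lam (x^2)"
proof -
  define s where "s = a^2 / (rm^2 + a^2)"
  have a_omega: "a * omega_minus a l rm = Xi a l * s"
    by (simp add: omega_minus_def s_def power2_eq_square)
  have "Xi a l * a^2 * (omega_minus a l rm)^2 + 2 * a * omega_minus a l rm * Xi a l * (a^2 / l^2)
      = Xi a l * (a * omega_minus a l rm)^2 + 2 * (a * omega_minus a l rm) * Xi a l * (a^2 / l^2)"
    by (simp add: power_mult_distrib)
  also have "\<dots> = (Xi a l)^2 * rot_coeff a l rm"
    unfolding a_omega by (simp add: rot_coeff_def s_def power2_eq_square algebra_simps)
  finally show ?thesis
    by (simp add: W1_def W_quad_def Delta_x_def power2_eq_square)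
qed

lemma KAdS_params_coeff_bounds:
  assumes "KAdS_params M a l rm rp"
  shows "0 < a^2 / l^2" "a^2 / l^2 < 1" "Xi a l = 1 - a^2 / l^2"
    and "0 \<le> rot_coeff a l rm" "rot_coeff a l rm < 1 + a^2 / l^2"
proof -
  define s where "s = a^2 / (rm^2 + a^2)"
  define al where "al = a^2 / l^2"
  have "0 < a" "a < l" "0 < rm"
    using assms by (auto simp: KAdS_params_def)
  then have "0 < a^2" "0 < rm^2" "0 < l^2" "a^2 < l^2"
    by (simp_all add: power_strict_mono)
  then have "0 < s" "s < 1" "0 < al" "al < 1"
    unfolding s_def al_def by (simp_all add: divide_less_eq_1 add_pos_pos)
  then show "0 < a^2 / l^2" "a^2 / l^2 < 1" "Xi a l = 1 - a^2 / l^2"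
    by (simp_all add: al_def Xi_def)
  have B: "rot_coeff a l rm = (1 - al) * s^2 + 2 * s * al"
    by (simp add: rot_coeff_def Xi_def s_def al_def)
  show "0 \<le> rot_coeff a l rm"
    using \<open>0 < s\<close> \<open>0 < al\<close> \<open>al < 1\<close> by (simp add: B)
  have "1 + al - rot_coeff a l rm = (1 - s^2) + al * (1 - s)^2"
    by (simp add: B power2_eq_square algebra_simps)
  moreover have "s^2 < 1"
    using \<open>0 < s\<close> \<open>s < 1\<close> by (simp add: power_less_one_iff)
  moreover have "0 \<le> al * (1 - s)^2"
    using \<open>0 < al\<close> by simp
  ultimately show "rot_coeff a l rm < 1 + a^2 / l^2"
    unfolding al_def by linarith
qed

lemma W_quad_threshold:
  "W_quad X al B (X^2) y = X^2 * y * ((1 + al - B) * (1 - y) + y)"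
  by (simp add: W_quad_def algebra_simps)

lemma W_quad_shift:
  "W_quad X al B lam y = W_quad X al B (X^2) y + (X^2 - lam) * (1 - al * y) * (1 - y)"
  by (simp add: W_quad_def algebra_simps)

lemma W_quad_threshold_pos:
  assumes "X \<noteq> 0" "B \<le> 1 + al" "0 < y" "y \<le> 1"
  shows "0 < W_quad X al B (X^2) y"
proof -
  have "0 < (1 + al - B) * (1 - y) + y"
    using assms by (smt (verit) mult_nonneg_nonneg)
  then show ?thesis
    using assms by (simp add: W_quad_threshold)
qed

lemma W_quad_pos:
  assumes "X \<noteq> 0" "al \<le> 1" "B \<le> 1 + al" "lam < X^2" "0 \<le> y" "y \<le> 1"
  shows "0 < W_quad X al B lam y"
proof (cases "y = 0")
  case True
  then show ?thesis
    using assms by (simp add: W_quad_def)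
next
  case False
  have "al * y \<le> 1"
    using assms by (smt (verit) mult_left_le mult_right_mono)
  then have "0 \<le> (X^2 - lam) * (1 - al * y) * (1 - y)"
    using assms by simp
  moreover have "0 < W_quad X al B (X^2) y"
    using W_quad_threshold_pos False assms by simp
  ultimately show ?thesis
    by (subst W_quad_shift) simp
qed

lemma has_real_derivative_W_quad:
  "(W_quad X al B lam has_real_derivative W_quad_dy X al B lam y) (at y)"
  unfolding W_quad_def W_quad_dy_def
  by (rule derivative_eq_intros refl | simp)+ (simp add: algebra_simps)

lemma W_quad_dy_ge:
  assumes "0 \<le> B" "X^2 \<le> lam" "0 \<le> y" "y \<le> 1"
  shows "lam * min (1 + al - B) (1 - al) \<le> W_quad_dy X al B lam y"
proof -
  let ?m = "lam * min (1 + al - B) (1 - al)"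
  have "0 \<le> lam"
    using assms(2) by (smt (verit) zero_le_power2)
  have at0: "?m \<le> lam * (1 + al) - X^2 * B"
  proof -
    have "?m \<le> lam * (1 + al - B)"
      using \<open>0 \<le> lam\<close> by (simp add: mult_left_mono)
    moreover have "X^2 * B \<le> lam * B"
      using assms by (simp add: mult_right_mono)
    ultimately show ?thesis
      by (simp add: algebra_simps)
  qed
  have at1: "?m \<le> X^2 * B + lam * (1 - al)"
    using \<open>0 \<le> lam\<close> assms(1) by (smt (verit) min.cobounded2 mult_left_mono zero_le_mult_iff zero_le_power2)
  have "W_quad_dy X al B lam y = (1 - y) * (lam * (1 + al) - X^2 * B) + y * (X^2 * B + lam * (1 - al))"
    by (simp add: W_quad_dy_def algebra_simps)
  also have "\<dots> \<ge> (1 - y) * ?m + y * ?m"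
    using at0 at1 assms(3,4) by (intro add_mono mult_left_mono) auto
  finally show ?thesis
    by (simp add: algebra_simps)
qed

lemma has_real_derivative_W_quad_sq:
  "((\<lambda>x. W_quad X al B lam (x^2)) has_real_derivative 2 * x * W_quad_dy X al B lam (x^2)) (at x)"
  using DERIV_chain2[OF has_real_derivative_W_quad DERIV_pow[of 2 x]] by (simp add: mult.commute)

lemma deriv_W_quad_sq_ge:
  assumes "0 \<le> B" "X^2 \<le> lam" "0 \<le> x" "x \<le> 1"
  shows "2 * min (1 + al - B) (1 - al) * lam * x \<le> deriv (\<lambda>x. W_quad X al B lam (x^2)) x"
proof -
  have "lam * min (1 + al - B) (1 - al) \<le> W_quad_dy X al B lam (x^2)"
    using assms by (intro W_quad_dy_ge) (auto simp: power_le_one)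
  then have "2 * x * (lam * min (1 + al - B) (1 - al)) \<le> 2 * x * W_quad_dy X al B lam (x^2)"
    using assms(3) by (simp add: mult_left_mono)
  moreover have "deriv (\<lambda>x. W_quad X al B lam (x^2)) x = 2 * x * W_quad_dy X al B lam (x^2)"
    by (rule DERIV_imp_deriv has_real_derivative_W_quad_sq)+
  ultimately show ?thesis
    by (simp add: algebra_simps)
qed

lemma strict_mono_on_W_quad_sq:
  assumes "0 \<le> B" "B < 1 + al" "al < 1" "X^2 < lam"
  shows "strict_mono_on {0..1} (\<lambda>x. W_quad X al B lam (x^2))"
proof (rule strict_mono_onI)
  fix r s :: real
  assume "r \<in> {0..1}" "s \<in> {0..1}" "r < s"
  have "0 < lam * min (1 + al - B) (1 - al)"
    using assms by (smt (verit) mult_pos_pos zero_le_power2 min_less_iff_conj)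
  have "0 < 2 * x * W_quad_dy X al B lam (x^2)" if "r < x" "x < s" for x
  proof -
    have "0 < x" "x \<le> 1"
      using that \<open>r \<in> {0..1}\<close> \<open>s \<in> {0..1}\<close> by auto
    then have "lam * min (1 + al - B) (1 - al) \<le> W_quad_dy X al B lam (x^2)"
      using assms by (intro W_quad_dy_ge) (auto simp: power_le_one)
    with \<open>0 < x\<close> \<open>0 < lam * min (1 + al - B) (1 - al)\<close> show ?thesis
      by (simp add: algebra_simps)
  qed
  moreover have "continuous_on {r..s} (\<lambda>x. W_quad X al B lam (x^2))"
    by (rule DERIV_continuous_on, rule has_field_derivative_at_within, rule has_real_derivative_W_quad_sq)
  ultimately show "W_quad X al B lam (r^2) < W_quad X al B lam (s^2)"
    using \<open>r < s\<close> has_real_derivative_W_quad_sq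
    by (intro DERIV_pos_imp_increasing_open[where f = "\<lambda>x. W_quad X al B lam (x^2)"]) blast+
qed

lemma W_quad_sq_unique_root:
  assumes "0 \<le> B" "B < 1 + al" "al < 1" "X^2 < lam" "X \<noteq> 0"
  shows "\<exists>!x. x \<in> {0..1} \<and> W_quad X al B lam (x^2) = 0"
    and "\<forall>x\<in>{0..1}. W_quad X al B lam (x^2) = 0 \<longrightarrow> x \<in> {0<..<1}"
proof -
  let ?f = "\<lambda>x. W_quad X al B lam (x^2)"
  have "continuous_on {0..1} ?f"
    by (rule DERIV_continuous_on, rule has_field_derivative_at_within, rule has_real_derivative_W_quad_sq)
  moreover have "?f 0 < 0" "0 < ?f 1"
    using assms by (auto simp: W_quad_def)
  ultimately show "\<exists>!x. x \<in> {0..1} \<and> ?f x = 0" and "\<forall>x\<in>{0..1}. ?f x = 0 \<longrightarrow> x \<in> {0<..<1}"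
    using strict_mono_on_unique_root[of 0 1 ?f] strict_mono_on_W_quad_sq[OF assms(1-4)] by simp_all
qed

theorem lemma3p1:
  fixes M a l rm rp :: real
  assumes "KAdS_params M a l rm rp"
  shows "(\<forall>lam. lam < (Xi a l)^2 \<longrightarrow> (\<forall>x\<in>{0..1}. W1 a l rm lam x > 0))
    \<and> (\<forall>lam. lam = (Xi a l)^2 \<longrightarrow>
          (\<forall>x\<in>{0<..1}. W1 a l rm lam x > 0) \<and> W1 a l rm lam 0 = 0)
    \<and> (\<forall>lam. lam > (Xi a l)^2 \<longrightarrow>
          (\<exists>!x0. x0 \<in> {0..1} \<and> W1 a l rm lam x0 = 0)
          \<and> (\<forall>x0\<in>{0..1}. W1 a l rm lam x0 = 0 \<longrightarrow> x0 \<in> {0<..<1}))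
    \<and> (\<exists>c>0. \<forall>lam. lam > (Xi a l)^2 \<longrightarrow>
          (\<forall>x\<in>{0..1}. deriv (W1 a l rm lam) x \<ge> c * lam * x))"
proof -
  define X al B where "X = Xi a l" and "al = a^2 / l^2" and "B = rot_coeff a l rm"
  note bounds = KAdS_params_coeff_bounds[OF assms, folded X_def al_def B_def]
  have W1: "W1 a l rm lam = (\<lambda>x. W_quad X al B lam (x^2))" for lam
    unfolding X_def al_def B_def by (rule ext, rule W1_eq_W_quad)
  have "X \<noteq> 0"
    using bounds by simp
  have "0 < 2 * min (1 + al - B) (1 - al)"
    using bounds by simp
  moreover have "2 * min (1 + al - B) (1 - al) * lam * x \<le> deriv (W1 a l rm lam) x"
    if "X^2 < lam" "x \<in> {0..1}" for lam x
    unfolding W1 using bounds that by (intro deriv_W_quad_sq_ge) auto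
  ultimately have "\<exists>c>0. \<forall>lam. X^2 < lam \<longrightarrow> (\<forall>x\<in>{0..1}. c * lam * x \<le> deriv (W1 a l rm lam) x)"
    by blast
  moreover have "0 < W1 a l rm lam x" if "lam < X^2" "x \<in> {0..1}" for lam x
    unfolding W1 using that bounds \<open>X \<noteq> 0\<close> by (intro W_quad_pos) (auto simp: power_le_one)
  moreover have "0 < W1 a l rm (X^2) x" if "x \<in> {0<..1}" for x
    unfolding W1 using that bounds \<open>X \<noteq> 0\<close> by (intro W_quad_threshold_pos) (auto simp: power_le_one)
  moreover have "W1 a l rm (X^2) 0 = 0"
    by (simp add: W1 W_quad_def)
  ultimately show ?thesis
    unfolding X_def[symmetric] W1 using W_quad_sq_unique_root bounds \<open>X \<noteq> 0\<close> by simp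
qed

end
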